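(* Let $f\in C^1([0,1])$ satisfy $f(0)=f(1)=0$, $f(u)>0$ for $u\in(0,1)$, $f'(0)>0$, $f(u)\leqslant f'(0)u$ for $u\in(0,1)$. For $\alpha\in\mathbb R$ and $\sigma>0$ let \[ k(x)=\frac{1}{\sqrt{2\pi\sigma}}\exp\Big(-\frac{(x-\alpha)^2}{2\sigma}\Big),\qquad r=\frac{\alpha}{\sqrt{2\sigma}}, \] and let $c_l^*,c_r^*$ be as in the context. If $f'(0)\geqslant1$, then $c_l^*<0<c_r^*$. If $f'(0)<1$, there exists a constant $r^*>0$ (depending only on $f'(0)$) such that: (i) if $r>r^*$, then $0<c_l^*<c_r^*$; (ii) if $r=r^*$, then $0=c_l^*<c_r^*$; (iii) if $-r^*<r<r^*$, then $c_l^*<0<c_r^*$; (iv) if $r=-r^*$, then $c_l^*<c_r^*=0$; (v) if $r<-r^*$, then $c_l^*<c_r^*<0$.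
   Context: $c_l^*=\sup_{\lambda<0}\{\lambda^{-1}[\int_{\mathbb R}k(x)e^{\lambda x}dx-1+f'(0)]\}$ and $c_r^*=\inf_{\lambda>0}\{\lambda^{-1}[\int_{\mathbb R}k(x)e^{\lambda x}dx-1+f'(0)]\}$ are the spreading speeds to the left and right of $u_t=\int_{\mathbb R}k(x-y)u(t,y)dy-u+f(u)$. *)

theory Defs
  imports "HOL-Analysis.Analysis"
begin

definition admissible_reaction :: "(real \<Rightarrow> real) \<Rightarrow> (real \<Rightarrow> real) \<Rightarrow> bool" where
  "admissible_reaction f f' \<longleftrightarrow>
     (\<forall>x\<in>{0..1}. (f has_real_derivative f' x) (at x within {0..1})) \<and>
     continuous_on {0..1} f' \<and>
     f 0 = 0 \<and> f 1 = 0 \<and>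
     (\<forall>u\<in>{0<..<1}. f u > 0) \<and>
     f' 0 > 0 \<and>
     (\<forall>u\<in>{0<..<1}. f u \<le> f' 0 * u)"

definition gauss_kernel :: "real \<Rightarrow> real \<Rightarrow> real \<Rightarrow> real" where
  "gauss_kernel \<alpha> \<sigma> x = 1 / sqrt (2 * pi * \<sigma>) * exp (- ((x - \<alpha>)^2) / (2 * \<sigma>))"

definition speed_fun :: "(real \<Rightarrow> real) \<Rightarrow> real \<Rightarrow> real \<Rightarrow> real" where
  "speed_fun k a l = ((\<integral>x. k x * exp (l * x) \<partial>lborel) - 1 + a) / l"

definition spreading_speed_left :: "(real \<Rightarrow> real) \<Rightarrow> real \<Rightarrow> real" where
  "spreading_speed_left k a = (SUP l\<in>{..<0}. speed_fun k a l)"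

definition spreading_speed_right :: "(real \<Rightarrow> real) \<Rightarrow> real \<Rightarrow> real" where
  "spreading_speed_right k a = (INF l\<in>{0<..}. speed_fun k a l)"

end

theory Submission
  imports Defs "HOL-Probability.Distributions"
begin

(* For the Gaussian kernel the integral in the definition of the speeds is the moment
   generating function exp (alpha l + sigma l^2 / 2), and the reflection x |-> -x turns
   c_l^* for alpha into -c_r^* for -alpha.  Since exp x >= 1 + x, AM-GM gives
   c_r^* >= alpha + sqrt (2 f'(0) sigma), whence c_l^* < c_r^*.  The sign of c_r^* is the
   sign of the numerator exp (alpha l + sigma l^2 / 2) - 1 + f'(0) at the minimiser
   l = -alpha/sigma of the exponent, i.e. of exp (-r^2) - (1 - f'(0)): if it is positive,
   the numerator is bounded away from 0 and c_r^* > 0; if it is zero or negative and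
   alpha < 0 (so that the minimiser is admissible), c_r^* = 0 or c_r^* < 0.  Hence the
   threshold is r^* = sqrt (- ln (1 - f'(0))). *)

lemma gauss_kernel_mgf:
  assumes "\<sigma> > 0"
  shows "(\<integral>x. gauss_kernel \<alpha> \<sigma> x * exp (l * x) \<partial>lborel) = exp (\<alpha> * l + \<sigma> * l\<^sup>2 / 2)"
proof -
  have "gauss_kernel \<alpha> \<sigma> x * exp (l * x) =
          exp (\<alpha> * l + \<sigma> * l\<^sup>2 / 2) * normal_density (\<alpha> + \<sigma> * l) (sqrt \<sigma>) x" for x
  proof -
    have square: "l * x - (x - \<alpha>)\<^sup>2 / (2 * \<sigma>) =
                  \<alpha> * l + \<sigma> * l\<^sup>2 / 2 - (x - (\<alpha> + \<sigma> * l))\<^sup>2 / (2 * \<sigma>)"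
      using assms by (simp add: field_simps power2_eq_square)
    show ?thesis
      unfolding gauss_kernel_def normal_density_def
      using assms by (simp add: exp_add[symmetric] exp_diff[symmetric] square)
  qed
  then show ?thesis
    using assms by simp
qed

lemma speed_fun_gauss:
  assumes "\<sigma> > 0"
  shows "speed_fun (gauss_kernel \<alpha> \<sigma>) a l = (exp (\<alpha> * l + \<sigma> * l\<^sup>2 / 2) - 1 + a) / l"
  unfolding speed_fun_def using gauss_kernel_mgf[OF assms] by simp

lemma speed_fun_reflect: "speed_fun k a (- l) = - speed_fun (\<lambda>x. k (- x)) a l"
proof -
  have "(\<integral>x. k x * exp (- l * x) \<partial>lborel) = (\<integral>x. k (- x) * exp (l * x) \<partial>lborel)"
    using lborel_integral_real_affine[of "-1" "\<lambda>x. k x * exp (- l * x)" 0] by simp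
  then show ?thesis
    unfolding speed_fun_def by simp
qed

lemma spreading_speed_left_reflect:
  "spreading_speed_left k a = - spreading_speed_right (\<lambda>x. k (- x)) a"
proof -
  have "speed_fun k a ` {..<0} = speed_fun k a ` uminus ` {0<..}"
    by simp
  also have "\<dots> = uminus ` speed_fun (\<lambda>x. k (- x)) a ` {0<..}"
    by (simp only: image_image speed_fun_reflect)
  finally have "speed_fun k a ` {..<0} = uminus ` speed_fun (\<lambda>x. k (- x)) a ` {0<..}" .
  then show ?thesis
    unfolding spreading_speed_left_def spreading_speed_right_def by (simp add: Inf_real_def)
qed

lemma gauss_kernel_reflect: "(\<lambda>x. gauss_kernel \<alpha> \<sigma> (- x)) = gauss_kernel (- \<alpha>) \<sigma>"
  unfolding gauss_kernel_def by (simp add: power2_commute add.commute)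

lemma spreading_speed_left_gauss:
  "spreading_speed_left (gauss_kernel \<alpha> \<sigma>) a = - spreading_speed_right (gauss_kernel (- \<alpha>) \<sigma>) a"
  using spreading_speed_left_reflect[of "gauss_kernel \<alpha> \<sigma>"] by (simp add: gauss_kernel_reflect)

lemma speed_fun_gauss_ge_linear:
  assumes "\<sigma> > 0" "l > 0"
  shows "\<alpha> + a / l + \<sigma> * l / 2 \<le> speed_fun (gauss_kernel \<alpha> \<sigma>) a l"
proof -
  have "a + \<alpha> * l + \<sigma> * l\<^sup>2 / 2 \<le> exp (\<alpha> * l + \<sigma> * l\<^sup>2 / 2) - 1 + a"
    using exp_ge_add_one_self[of "\<alpha> * l + \<sigma> * l\<^sup>2 / 2"] by linarith
  then have "(a + \<alpha> * l + \<sigma> * l\<^sup>2 / 2) / l \<le> (exp (\<alpha> * l + \<sigma> * l\<^sup>2 / 2) - 1 + a) / l"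
    using assms(2) by (rule divide_right_mono[OF _ less_imp_le])
  moreover have "(a + \<alpha> * l + \<sigma> * l\<^sup>2 / 2) / l = \<alpha> + a / l + \<sigma> * l / 2"
    using assms(2) by (simp add: field_simps power2_eq_square)
  ultimately show ?thesis
    using speed_fun_gauss[OF assms(1)] by simp
qed

lemma speed_fun_gauss_ge:
  assumes "\<sigma> > 0" "a \<ge> 0" "l > 0"
  shows "\<alpha> + sqrt (2 * a * \<sigma>) \<le> speed_fun (gauss_kernel \<alpha> \<sigma>) a l"
proof -
  have "sqrt (2 * a * \<sigma>) = sqrt ((2 * a / l) * (\<sigma> * l))"
    using assms(3) by simp
  also have "\<dots> \<le> a / l + \<sigma> * l / 2"
    using arith_geo_mean_sqrt[of "2 * a / l" "\<sigma> * l"] assms by simp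
  finally show ?thesis
    using speed_fun_gauss_ge_linear[OF assms(1,3), of \<alpha> a] by linarith
qed

lemma bdd_below_speed_fun_gauss:
  assumes "\<sigma> > 0" "a \<ge> 0"
  shows "bdd_below (speed_fun (gauss_kernel \<alpha> \<sigma>) a ` {0<..})"
  using speed_fun_gauss_ge[OF assms] by (intro bdd_belowI2) auto

lemma spreading_speed_right_gauss_ge:
  assumes "\<sigma> > 0" "a \<ge> 0"
  shows "\<alpha> + sqrt (2 * a * \<sigma>) \<le> spreading_speed_right (gauss_kernel \<alpha> \<sigma>) a"
  unfolding spreading_speed_right_def
  using speed_fun_gauss_ge[OF assms] by (intro cINF_greatest) auto

lemma spreading_speed_left_less_right_gauss:
  assumes "\<sigma> > 0" "a > 0"
  shows "spreading_speed_left (gauss_kernel \<alpha> \<sigma>) a < spreading_speed_right (gauss_kernel \<alpha> \<sigma>) a"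
proof -
  have "0 < sqrt (2 * a * \<sigma>)"
    using assms by simp
  then show ?thesis
    unfolding spreading_speed_left_gauss
    using spreading_speed_right_gauss_ge[OF assms(1), of a \<alpha>]
      spreading_speed_right_gauss_ge[OF assms(1), of a "- \<alpha>"] assms
    by linarith
qed

lemma INF_pos_of_reciprocal_and_linear_bounds:
  fixes h :: "real \<Rightarrow> real"
  assumes "\<delta> > 0" "\<beta> > 0"
    and reciprocal: "\<And>l. l > 0 \<Longrightarrow> \<delta> / l \<le> h l"
    and linear: "\<And>l. l > 0 \<Longrightarrow> \<gamma> + \<beta> * l \<le> h l"
  shows "0 < (INF l\<in>{0<..}. h l)"
proof -
  define m where "m = (\<bar>\<gamma>\<bar> + 1) / \<beta>"
  have "m > 0"
    unfolding m_def using assms(2) by simp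
  have "min (\<delta> / m) 1 \<le> (INF l\<in>{0<..}. h l)"
  proof (rule cINF_greatest)
    fix l :: real
    assume "l \<in> {0<..}"
    then have "l > 0"
      by simp
    show "min (\<delta> / m) 1 \<le> h l"
    proof (cases "l \<le> m")
      case True
      then have "\<delta> / m \<le> \<delta> / l"
        using \<open>l > 0\<close> assms(1) by (simp add: frac_le)
      then show ?thesis
        using reciprocal[OF \<open>l > 0\<close>] by linarith
    next
      case False
      then have "\<bar>\<gamma>\<bar> + 1 < \<beta> * l"
        using assms(2) unfolding m_def by (simp add: field_simps)
      then show ?thesis
        using linear[OF \<open>l > 0\<close>] abs_ge_minus_self[of \<gamma>] by linarith
    qed
  qed simp
  moreover have "0 < min (\<delta> / m) 1"
    using assms(1) \<open>m > 0\<close> by simp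
  ultimately show ?thesis
    by linarith
qed

lemma gauss_exponent_completed_square:
  fixes \<alpha> \<sigma> l :: real
  assumes "\<sigma> > 0"
  shows "\<alpha> * l + \<sigma> * l\<^sup>2 / 2 = \<sigma> / 2 * (l + \<alpha> / \<sigma>)\<^sup>2 - \<alpha>\<^sup>2 / (2 * \<sigma>)"
  using assms by (simp add: field_simps power2_eq_square)

lemma speed_fun_gauss_ge_reciprocal:
  assumes "\<sigma> > 0" "l > 0"
  shows "(exp (- (\<alpha>\<^sup>2 / (2 * \<sigma>))) - 1 + a) / l \<le> speed_fun (gauss_kernel \<alpha> \<sigma>) a l"
proof -
  have "- (\<alpha>\<^sup>2 / (2 * \<sigma>)) \<le> \<alpha> * l + \<sigma> * l\<^sup>2 / 2"
    using gauss_exponent_completed_square[OF assms(1)] assms(1) by simp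
  then have "exp (- (\<alpha>\<^sup>2 / (2 * \<sigma>))) - 1 + a \<le> exp (\<alpha> * l + \<sigma> * l\<^sup>2 / 2) - 1 + a"
    by simp
  then show ?thesis
    unfolding speed_fun_gauss[OF assms(1)] using assms(2) by (simp add: divide_right_mono)
qed

lemma speed_fun_gauss_at_minimiser:
  assumes "\<sigma> > 0"
  shows "speed_fun (gauss_kernel \<alpha> \<sigma>) a (- \<alpha> / \<sigma>) = (exp (- (\<alpha>\<^sup>2 / (2 * \<sigma>))) - 1 + a) / (- \<alpha> / \<sigma>)"
proof -
  have "\<alpha> * (- \<alpha> / \<sigma>) + \<sigma> * (- \<alpha> / \<sigma>)\<^sup>2 / 2 = - (\<alpha>\<^sup>2 / (2 * \<sigma>))"
    using gauss_exponent_completed_square[OF assms, of \<alpha> "- \<alpha> / \<sigma>"] by simp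
  then show ?thesis
    by (simp only: speed_fun_gauss[OF assms])
qed

lemma spreading_speed_right_gauss_pos:
  assumes "\<sigma> > 0" "a \<ge> 0" "1 - a < exp (- (\<alpha>\<^sup>2 / (2 * \<sigma>)))"
  shows "0 < spreading_speed_right (gauss_kernel \<alpha> \<sigma>) a"
  unfolding spreading_speed_right_def
proof (rule INF_pos_of_reciprocal_and_linear_bounds)
  show "0 < exp (- (\<alpha>\<^sup>2 / (2 * \<sigma>))) - 1 + a" "0 < \<sigma> / 2"
    using assms by simp_all
  show "(exp (- (\<alpha>\<^sup>2 / (2 * \<sigma>))) - 1 + a) / l \<le> speed_fun (gauss_kernel \<alpha> \<sigma>) a l" if "l > 0" for l
    using speed_fun_gauss_ge_reciprocal[OF assms(1) that] .
  show "\<alpha> + \<sigma> / 2 * l \<le> speed_fun (gauss_kernel \<alpha> \<sigma>) a l" if "l > 0" for l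
  proof -
    have "0 \<le> a / l" "\<sigma> / 2 * l = \<sigma> * l / 2"
      using assms(2) that by simp_all
    then show ?thesis
      using speed_fun_gauss_ge_linear[OF assms(1) that, of \<alpha> a] by linarith
  qed
qed

lemma spreading_speed_right_gauss_le_at_minimiser:
  assumes "\<sigma> > 0" "a \<ge> 0" "\<alpha> < 0"
  shows "spreading_speed_right (gauss_kernel \<alpha> \<sigma>) a \<le> (exp (- (\<alpha>\<^sup>2 / (2 * \<sigma>))) - 1 + a) / (- \<alpha> / \<sigma>)"
proof -
  have "- \<alpha> / \<sigma> > 0"
    using assms by (simp add: divide_neg_pos)
  then show ?thesis
    unfolding spreading_speed_right_def speed_fun_gauss_at_minimiser[OF assms(1), symmetric]
    using bdd_below_speed_fun_gauss[OF assms(1,2)] by (intro cINF_lower) auto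
qed

lemma spreading_speed_right_gauss_neg:
  assumes "\<sigma> > 0" "a \<ge> 0" "\<alpha> < 0" "exp (- (\<alpha>\<^sup>2 / (2 * \<sigma>))) < 1 - a"
  shows "spreading_speed_right (gauss_kernel \<alpha> \<sigma>) a < 0"
proof -
  have "(exp (- (\<alpha>\<^sup>2 / (2 * \<sigma>))) - 1 + a) / (- \<alpha> / \<sigma>) < 0"
    using assms by (intro divide_neg_pos) (simp_all add: divide_neg_pos)
  then show ?thesis
    using spreading_speed_right_gauss_le_at_minimiser[OF assms(1-3)] by linarith
qed

lemma spreading_speed_right_gauss_zero:
  assumes "\<sigma> > 0" "a \<ge> 0" "\<alpha> < 0" "exp (- (\<alpha>\<^sup>2 / (2 * \<sigma>))) = 1 - a"
  shows "spreading_speed_right (gauss_kernel \<alpha> \<sigma>) a = 0"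
proof (rule antisym)
  show "spreading_speed_right (gauss_kernel \<alpha> \<sigma>) a \<le> 0"
    using spreading_speed_right_gauss_le_at_minimiser[OF assms(1-3)] assms(4) by simp
  show "0 \<le> spreading_speed_right (gauss_kernel \<alpha> \<sigma>) a"
    unfolding spreading_speed_right_def
    using speed_fun_gauss_ge_reciprocal[OF assms(1), of _ \<alpha> a] assms(4)
    by (intro cINF_greatest) auto
qed

definition spreading_threshold :: "real \<Rightarrow> real" where
  "spreading_threshold a = sqrt (- ln (1 - a))"

lemma spreading_threshold_pos: "0 < a \<Longrightarrow> a < 1 \<Longrightarrow> 0 < spreading_threshold a"
  unfolding spreading_threshold_def by simp

lemma exp_neg_spreading_threshold_sq:
  "0 \<le> a \<Longrightarrow> a < 1 \<Longrightarrow> exp (- (spreading_threshold a)\<^sup>2) = 1 - a"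
  unfolding spreading_threshold_def by simp

lemma spreading_speed_right_gauss_threshold:
  fixes \<alpha> \<sigma> a :: real
  assumes "\<sigma> > 0" "0 < a" "a < 1"
  defines "r \<equiv> \<alpha> / sqrt (2 * \<sigma>)"
  shows "\<bar>r\<bar> < spreading_threshold a \<Longrightarrow> 0 < spreading_speed_right (gauss_kernel \<alpha> \<sigma>) a"
    and "r = - spreading_threshold a \<Longrightarrow> spreading_speed_right (gauss_kernel \<alpha> \<sigma>) a = 0"
    and "r < - spreading_threshold a \<Longrightarrow> spreading_speed_right (gauss_kernel \<alpha> \<sigma>) a < 0"
proof -
  define R where "R = spreading_threshold a"
  have "0 < R" and exp_R: "exp (- R\<^sup>2) = 1 - a"
    unfolding R_def using assms spreading_threshold_pos exp_neg_spreading_threshold_sq by auto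
  have r_sq: "\<alpha>\<^sup>2 / (2 * \<sigma>) = r\<^sup>2"
    unfolding r_def using assms(1) by (simp add: power_divide)
  have r_neg: "\<alpha> < 0 \<longleftrightarrow> r < 0"
    unfolding r_def using assms(1) by (simp add: divide_less_0_iff)
  show "0 < spreading_speed_right (gauss_kernel \<alpha> \<sigma>) a" if "\<bar>r\<bar> < R"
  proof -
    have "r\<^sup>2 < R\<^sup>2"
      using that power_strict_mono[of "\<bar>r\<bar>" R 2] by simp
    then have "exp (- R\<^sup>2) < exp (- r\<^sup>2)"
      by simp
    then have "1 - a < exp (- (\<alpha>\<^sup>2 / (2 * \<sigma>)))"
      using exp_R r_sq by simp
    then show ?thesis
      using spreading_speed_right_gauss_pos assms by simp
  qed
  show "spreading_speed_right (gauss_kernel \<alpha> \<sigma>) a = 0" if "r = - R"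
  proof -
    have "\<alpha> < 0"
      using that \<open>0 < R\<close> r_neg by simp
    moreover have "exp (- (\<alpha>\<^sup>2 / (2 * \<sigma>))) = 1 - a"
      using that exp_R r_sq by simp
    ultimately show ?thesis
      using spreading_speed_right_gauss_zero assms(1,2) by simp
  qed
  show "spreading_speed_right (gauss_kernel \<alpha> \<sigma>) a < 0" if "r < - R"
  proof -
    have "R\<^sup>2 < r\<^sup>2"
      using that \<open>0 < R\<close> power_strict_mono[of R "- r" 2] by simp
    then have "exp (- r\<^sup>2) < exp (- R\<^sup>2)"
      by simp
    then have "exp (- (\<alpha>\<^sup>2 / (2 * \<sigma>))) < 1 - a"
      using exp_R r_sq by simp
    then show ?thesis
      using spreading_speed_right_gauss_neg[of \<sigma> a \<alpha>] assms(1,2) that \<open>0 < R\<close> r_neg by simp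
  qed
qed

lemma spreading_speeds_gauss_large_growth:
  assumes "\<sigma> > 0" "1 \<le> a"
  shows "spreading_speed_left (gauss_kernel \<alpha> \<sigma>) a < 0 \<and> 0 < spreading_speed_right (gauss_kernel \<alpha> \<sigma>) a"
proof -
  have "0 < spreading_speed_right (gauss_kernel \<beta> \<sigma>) a" for \<beta>
  proof (rule spreading_speed_right_gauss_pos)
    show "1 - a < exp (- (\<beta>\<^sup>2 / (2 * \<sigma>)))"
      using assms(2) exp_gt_zero[of "- (\<beta>\<^sup>2 / (2 * \<sigma>))"] by linarith
  qed (use assms in simp_all)
  then show ?thesis
    by (simp add: spreading_speed_left_gauss)
qed

lemma spreading_speeds_gauss_small_growth:
  fixes \<alpha> \<sigma> a :: real
  assumes "\<sigma> > 0" "0 < a" "a < 1"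
  defines "R \<equiv> spreading_threshold a" and "r \<equiv> \<alpha> / sqrt (2 * \<sigma>)"
    and "cl \<equiv> spreading_speed_left (gauss_kernel \<alpha> \<sigma>) a"
    and "cr \<equiv> spreading_speed_right (gauss_kernel \<alpha> \<sigma>) a"
  shows "(r > R \<longrightarrow> 0 < cl \<and> cl < cr) \<and>
         (r = R \<longrightarrow> 0 = cl \<and> cl < cr) \<and>
         (- R < r \<and> r < R \<longrightarrow> cl < 0 \<and> 0 < cr) \<and>
         (r = - R \<longrightarrow> cl < cr \<and> cr = 0) \<and>
         (r < - R \<longrightarrow> cl < cr \<and> cr < 0)"
proof -
  note right = spreading_speed_right_gauss_threshold[OF assms(1-3)]
  have cl: "cl = - spreading_speed_right (gauss_kernel (- \<alpha>) \<sigma>) a"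
    unfolding cl_def by (rule spreading_speed_left_gauss)
  have "cl < cr"
    unfolding cl_def cr_def using spreading_speed_left_less_right_gauss assms(1,2) .
  moreover have "0 < cl" if "R < r"
    using right(3)[of "- \<alpha>"] that unfolding cl R_def r_def by simp
  moreover have "0 = cl" if "r = R"
    using right(2)[of "- \<alpha>"] that unfolding cl R_def r_def by simp
  moreover have "cl < 0" and "0 < cr" if "\<bar>r\<bar> < R"
    using right(1)[of "- \<alpha>"] right(1)[of \<alpha>] that unfolding cl cr_def R_def r_def by simp_all
  moreover have "cr = 0" if "r = - R"
    using right(2)[of \<alpha>] that unfolding cr_def R_def r_def by simp
  moreover have "cr < 0" if "r < - R"
    using right(3)[of \<alpha>] that unfolding cr_def R_def r_def by simp
  ultimately show ?thesis
    by (auto simp: abs_less_iff)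
qed

theorem corollary5p1:
  shows "(\<forall>f f' \<alpha> \<sigma>. admissible_reaction f f' \<and> f' 0 \<ge> 1 \<and> \<sigma> > 0 \<longrightarrow>
            spreading_speed_left (gauss_kernel \<alpha> \<sigma>) (f' 0) < 0 \<and>
            0 < spreading_speed_right (gauss_kernel \<alpha> \<sigma>) (f' 0)) \<and>
         (\<exists>rstar :: real \<Rightarrow> real. \<forall>f f'. admissible_reaction f f' \<and> f' 0 < 1 \<longrightarrow>
            rstar (f' 0) > 0 \<and>
            (\<forall>\<alpha> \<sigma>. \<sigma> > 0 \<longrightarrow>
              (let r = \<alpha> / sqrt (2 * \<sigma>);
                   cl = spreading_speed_left (gauss_kernel \<alpha> \<sigma>) (f' 0);
                   cr = spreading_speed_right (gauss_kernel \<alpha> \<sigma>) (f' 0)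
               in (r > rstar (f' 0) \<longrightarrow> 0 < cl \<and> cl < cr) \<and>
                  (r = rstar (f' 0) \<longrightarrow> 0 = cl \<and> cl < cr) \<and>
                  (- rstar (f' 0) < r \<and> r < rstar (f' 0) \<longrightarrow> cl < 0 \<and> 0 < cr) \<and>
                  (r = - rstar (f' 0) \<longrightarrow> cl < cr \<and> cr = 0) \<and>
                  (r < - rstar (f' 0) \<longrightarrow> cl < cr \<and> cr < 0))))"
proof -
  have growth_rate: "0 < f' 0" if "admissible_reaction f f'" for f f' :: "real \<Rightarrow> real"
    using that unfolding admissible_reaction_def by blast
  show ?thesis
    unfolding Let_def
    using spreading_speeds_gauss_large_growth growth_rate spreading_threshold_pos
      spreading_speeds_gauss_small_growth
    by (intro conjI exI[of _ spreading_threshold]) blast+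
qed

end
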